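(* Let $\mathcal{D}(\rho)=(1-p)\rho+\frac p3(X\rho X+Y\rho Y+Z\rho Z)$ and $\mathcal{E}(\rho)=(1-q)\rho+\frac q3(X\rho X+Y\rho Y+Z\rho Z)$ be depolarizing channels with $p,q\in[0,1]$. The entanglement-assisted classical communication capacity over a quantum trajectory is $$C_{\text{E,Q}}=2+H(\alpha)+\Big(1-p-q+\tfrac{4pq}{3}\Big)\log_2\Big(1-p-q+\tfrac{4pq}{3}\Big)+(p+q-2pq)\log_2\Big(\tfrac{p+q-2pq}{3}\Big)+\tfrac{2pq}{3}\log_2\tfrac{2pq}{9},$$ where $\alpha=1-\frac{2pq}{3}$ and $H(\alpha)=-\alpha\log_2\alpha-(1-\alpha)\log_2(1-\alpha)$.
   Context: $X,Y,Z$ are Pauli matrices, $\sigma_0=I,\sigma_1=X,\sigma_2=Y,\sigma_3=Z$, $|\pm\rangle=(|0\rangle\pm|1\rangle)/\sqrt2$, $0\log_2 0=0$. For a Pauli channel $\mathcal{N}(\rho)=\sum_i r_i\sigma_i\rho\sigma_i$, the entanglement-assisted classical capacity (superdense coding, pre-shared EPR pair, equiprobable inputs) is $C_E(\mathcal{N})=2+\sum_i r_i\log_2 r_i$. Quantum trajectory: given Kraus operators $\{D_i\}$ of $\mathcal{D}$ and $\{E_j\}$ of $\mathcal{E}$ (multiples of Pauli matrices), the switched channel on data $\rho$ and control $\omega=|+\rangle\langle+|$ is $\sum_{i,j}W_{i,j}(\rho\otimes\omega)W_{i,j}^\dagger$ with $W_{i,j}=E_jD_i\otimes|0\rangle\langle0|+D_iE_j\otimes|1\rangle\langle1|$.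 Its output has the form $p_+\mathcal{S}_+(\rho)\otimes|+\rangle\langle+|+p_-\mathcal{S}_-(\rho)\otimes|-\rangle\langle-|$ (commuting Kraus pairs go to the $|+\rangle$ branch, anticommuting pairs to the $|-\rangle$ branch), with $\mathcal{S}_\pm$ normalized Pauli channels; the capacity is defined as $C_{\text{E,Q}}=p_+C_E(\mathcal{S}_+)+p_-C_E(\mathcal{S}_-)$. *)

theory Defs
  imports "HOL-Analysis.Analysis"
begin

text \<open>Pauli matrices sigma_0 = I, sigma_1 = X, sigma_2 = Y, sigma_3 = Z as complex 2x2 matrices
  (row/column index 1 of type 2 is basis state |0>, index 2 is |1>).\<close>

definition pauli :: "nat \<Rightarrow> complex^2^2" where
  "pauli k = (if k = 0 then mat 1
     else if k = 1 then (\<chi> r c. if r \<noteq> c then 1 else 0)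
     else if k = 2 then (\<chi> r c. if r = 1 \<and> c = 2 then - \<i> else if r = 2 \<and> c = 1 then \<i> else 0)
     else (\<chi> r c. if r = c then (if r = 1 then 1 else -1) else 0))"

text \<open>Pauli channel N(rho) = sum_i r_i sigma_i rho sigma_i, represented by its coefficient vector
  r :: nat => real (indices 0..3).\<close>

definition depolarizing :: "real \<Rightarrow> nat \<Rightarrow> real" where
  "depolarizing p i = (if i = 0 then 1 - p else p / 3)"

definition xlog2 :: "real \<Rightarrow> real" where
  "xlog2 x = (if x = 0 then 0 else x * log 2 x)"

definition C_E :: "(nat \<Rightarrow> real) \<Rightarrow> real" where
  "C_E r = 2 + (\<Sum>i<4. xlog2 (r i))"

definition kraus_commute :: "nat \<Rightarrow> nat \<Rightarrow> bool" where
  "kraus_commute i j \<longleftrightarrow> pauli i ** pauli j = pauli j ** pauli i"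

text \<open>The Kraus operator E_j D_i (equivalently D_i E_j up to sign) is proportional to sigma_k.\<close>
definition prod_prop :: "nat \<Rightarrow> nat \<Rightarrow> nat \<Rightarrow> bool" where
  "prod_prop i j k \<longleftrightarrow> (\<exists>c::complex. pauli j ** pauli i = (\<chi> r s. c * pauli k $ r $ s))"

text \<open>Branch weights p_+ (commuting pairs) and p_- (anticommuting pairs) of the switched
  channel, for Pauli channels D, E with coefficients d, e.\<close>
definition p_plus :: "(nat \<Rightarrow> real) \<Rightarrow> (nat \<Rightarrow> real) \<Rightarrow> real" where
  "p_plus d e = (\<Sum>i<4. \<Sum>j<4. if kraus_commute i j then d i * e j else 0)"

definition p_minus :: "(nat \<Rightarrow> real) \<Rightarrow> (nat \<Rightarrow> real) \<Rightarrow> real" where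
  "p_minus d e = (\<Sum>i<4. \<Sum>j<4. if kraus_commute i j then 0 else d i * e j)"

definition S_plus :: "(nat \<Rightarrow> real) \<Rightarrow> (nat \<Rightarrow> real) \<Rightarrow> nat \<Rightarrow> real" where
  "S_plus d e k = (\<Sum>i<4. \<Sum>j<4. if kraus_commute i j \<and> prod_prop i j k then d i * e j else 0)
                   / p_plus d e"

definition S_minus :: "(nat \<Rightarrow> real) \<Rightarrow> (nat \<Rightarrow> real) \<Rightarrow> nat \<Rightarrow> real" where
  "S_minus d e k = (\<Sum>i<4. \<Sum>j<4. if \<not> kraus_commute i j \<and> prod_prop i j k then d i * e j else 0)
                   / p_minus d e"

definition C_EQ :: "(nat \<Rightarrow> real) \<Rightarrow> (nat \<Rightarrow> real) \<Rightarrow> real" where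
  "C_EQ d e = p_plus d e * C_E (S_plus d e) + p_minus d e * C_E (S_minus d e)"

definition H2 :: "real \<Rightarrow> real" where
  "H2 a = - xlog2 a - xlog2 (1 - a)"

end

(*
  Pauli matrices multiply, up to a phase, like the Klein four-group: reading I, X, Y, Z as the
  bit pairs 00, 01, 10, 11, the product of sigma_i and sigma_j is proportional to
  sigma_(i xor j).  So every Kraus pair (sigma_i, sigma_j) feeds exactly one coefficient of exactly
  one branch, and the unnormalized coefficients w_+ and w_- of S_+ and S_- sum to p_+ and p_-.
  Normalizing then gives p C_E(w / p) = 2 p + sum_k w_k log w_k - p log p for each branch, and
  since p_+ + p_- = 1 the two branches add up to
    C_EQ = 2 + H(p_+) + sum_k w_+k log w_+k + sum_k w_-k log w_-k.
  For two depolarizing channels p_+ = 1 - 2pq/3, w_+ = (1 - p - q + 4pq/3, s, s, s) with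
  s = (p + q - 2pq)/3, and w_- = (0, 2pq/9, 2pq/9, 2pq/9).
*)
theory Submission
  imports Defs
begin

lemma less_4_cases: "(i::nat) < 4 \<Longrightarrow> i = 0 \<or> i = 1 \<or> i = 2 \<or> i = 3"
  by auto

lemma sum_lessThan_4: "(\<Sum>i<4::nat. f i) = f 0 + f 1 + f 2 + (f 3 :: 'a::comm_monoid_add)"
  by (simp add: eval_nat_numeral ac_simps)

lemma xor_less_4: "i < 4 \<Longrightarrow> j < 4 \<Longrightarrow> xor i j < (4::nat)"
  by (auto dest!: less_4_cases)

definition mat2 :: "'a \<Rightarrow> 'a \<Rightarrow> 'a \<Rightarrow> 'a \<Rightarrow> 'a^2^2" where
  "mat2 a b c d = (\<chi> r s. if r = 1 then (if s = 1 then a else b) else (if s = 1 then c else d))"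

definition scale_mat :: "complex \<Rightarrow> complex^2^2 \<Rightarrow> complex^2^2" where
  "scale_mat c A = (\<chi> r s. c * A $ r $ s)"

lemma mat2_eq_iff: "mat2 a b c d = mat2 a' b' c' d' \<longleftrightarrow> a = a' \<and> b = b' \<and> c = c' \<and> d = d'"
  unfolding mat2_def vec_eq_iff by (auto simp: forall_2)

lemma mat2_mult:
  "mat2 a b c d ** mat2 a' b' c' d' =
     mat2 (a*a' + b*c') (a*b' + b*d') (c*a' + d*c') (c*b' + d*d')"
  unfolding mat2_def matrix_matrix_mult_def by (auto simp: vec_eq_iff forall_2 UNIV_2)

lemma scale_mat_mat2: "scale_mat x (mat2 a b c d) = mat2 (x*a) (x*b) (x*c) (x*d)"
  unfolding scale_mat_def mat2_def by (auto simp: vec_eq_iff forall_2)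

lemma pauli_mat2:
  "pauli 0 = mat2 1 0 0 1" "pauli 1 = mat2 0 1 1 0"
  "pauli 2 = mat2 0 (-\<i>) \<i> 0" "pauli 3 = mat2 1 0 0 (-1)"
  unfolding pauli_def mat2_def mat_def by (auto simp: vec_eq_iff forall_2)

lemmas pauli_mat2_Suc = pauli_mat2(2)[unfolded One_nat_def]

lemma kraus_commute_iff:
  assumes "i < 4" "j < 4"
  shows "kraus_commute i j \<longleftrightarrow> i = 0 \<or> j = 0 \<or> i = j"
  using less_4_cases[OF assms(1)] less_4_cases[OF assms(2)] unfolding kraus_commute_def
  by (elim disjE) (simp_all add: pauli_mat2 pauli_mat2_Suc mat2_mult mat2_eq_iff)

lemma pauli_mult_xor:
  assumes "i < 4" "j < 4"
  shows "\<exists>c. c \<noteq> 0 \<and> pauli j ** pauli i = scale_mat c (pauli (xor i j))"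
  by (insert less_4_cases[OF assms(1)] less_4_cases[OF assms(2)])
    (elim disjE; simp add: pauli_mat2 pauli_mat2_Suc mat2_mult mat2_eq_iff scale_mat_mat2;
      (rule exI[of _ \<i>] exI[of _ "-\<i>"], simp; fail)?)

lemma scale_mat_pauli_inj:
  assumes "k < 4" "m < 4" "c \<noteq> 0" "scale_mat c (pauli k) = scale_mat c' (pauli m)"
  shows "k = m"
  using less_4_cases[OF assms(1)] less_4_cases[OF assms(2)] assms(3,4)
  by (elim disjE)
    (simp_all add: pauli_mat2 pauli_mat2_Suc mat2_eq_iff scale_mat_mat2, auto simp: eq_neg_iff_add_eq_0)

lemma prod_prop_iff:
  assumes "i < 4" "j < 4" "k < 4"
  shows "prod_prop i j k \<longleftrightarrow> k = xor i j"
proof -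
  obtain c where "c \<noteq> 0" and c: "pauli j ** pauli i = scale_mat c (pauli (xor i j))"
    using pauli_mult_xor[OF assms(1,2)] by blast
  have "prod_prop i j k \<longleftrightarrow> (\<exists>c'. scale_mat c (pauli (xor i j)) = scale_mat c' (pauli k))"
    unfolding prod_prop_def c by (simp add: scale_mat_def)
  also have "\<dots> \<longleftrightarrow> k = xor i j"
    using scale_mat_pauli_inj[OF xor_less_4[OF assms(1,2)] assms(3) \<open>c \<noteq> 0\<close>] by metis
  finally show ?thesis .
qed

definition weight_plus :: "(nat \<Rightarrow> real) \<Rightarrow> (nat \<Rightarrow> real) \<Rightarrow> nat \<Rightarrow> real" where
  "weight_plus d e k =
     (\<Sum>i<4. \<Sum>j<4. if kraus_commute i j \<and> prod_prop i j k then d i * e j else 0)"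

definition weight_minus :: "(nat \<Rightarrow> real) \<Rightarrow> (nat \<Rightarrow> real) \<Rightarrow> nat \<Rightarrow> real" where
  "weight_minus d e k =
     (\<Sum>i<4. \<Sum>j<4. if \<not> kraus_commute i j \<and> prod_prop i j k then d i * e j else 0)"

lemma S_plus_eq_weight_plus: "S_plus d e = (\<lambda>k. weight_plus d e k / p_plus d e)"
  unfolding S_plus_def weight_plus_def ..

lemma S_minus_eq_weight_minus: "S_minus d e = (\<lambda>k. weight_minus d e k / p_minus d e)"
  unfolding S_minus_def weight_minus_def ..

lemma sum_if_prod_prop:
  assumes "i < 4" "j < 4"
  shows "(\<Sum>k<4. if P \<and> prod_prop i j k then x else 0) = (if P then x else (0::real))"
proof -
  have "(\<Sum>k<4. if P \<and> prod_prop i j k then x else 0) =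
        (\<Sum>k<4. if k = xor i j then (if P then x else 0) else 0)"
    using assms by (intro sum.cong) (auto simp: prod_prop_iff)
  then show ?thesis
    using xor_less_4[OF assms] by simp
qed

lemma sum_sum_sum_if_prod_prop:
  "(\<Sum>k<4. \<Sum>i<4. \<Sum>j<4. if P i j \<and> prod_prop i j k then f i j else 0) =
   (\<Sum>i<4. \<Sum>j<4. if P i j then f i j else (0::real))"
proof -
  have "(\<Sum>k<4. \<Sum>i<4. \<Sum>j<4. if P i j \<and> prod_prop i j k then f i j else 0) =
        (\<Sum>i<4. \<Sum>k<4. \<Sum>j<4. if P i j \<and> prod_prop i j k then f i j else 0)"
    by (rule sum.swap)
  also have "\<dots> = (\<Sum>i<4. \<Sum>j<4. \<Sum>k<4. if P i j \<and> prod_prop i j k then f i j else 0)"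
    by (rule sum.cong[OF refl], rule sum.swap)
  also have "\<dots> = (\<Sum>i<4. \<Sum>j<4. if P i j then f i j else 0)"
    by (intro sum.cong refl) (simp add: sum_if_prod_prop)
  finally show ?thesis .
qed

lemma sum_weight_plus: "(\<Sum>k<4. weight_plus d e k) = p_plus d e"
  unfolding weight_plus_def p_plus_def by (rule sum_sum_sum_if_prod_prop)

lemma sum_weight_minus: "(\<Sum>k<4. weight_minus d e k) = p_minus d e"
  unfolding weight_minus_def p_minus_def by (subst sum_sum_sum_if_prod_prop) (intro sum.cong refl, simp)

lemma p_plus_add_p_minus: "p_plus d e + p_minus d e = (\<Sum>i<4. d i) * (\<Sum>j<4. e j)"
  unfolding p_plus_def p_minus_def sum_product sum.distrib[symmetric]
  by (intro sum.cong refl) simp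

lemma xlog2_divide:
  assumes "0 < a" "0 \<le> x"
  shows "a * xlog2 (x / a) = xlog2 x - x * log 2 a"
  using assms by (cases "x = 0") (simp_all add: xlog2_def log_divide field_simps)

lemma mult_xlog2_divide: "c \<noteq> 0 \<Longrightarrow> c * xlog2 (x / c) = x * log 2 (x / c)"
  by (simp add: xlog2_def)

text \<open>No positivity of a is needed: for a = 0 both sides vanish despite the junk division.
  This covers the anticommuting branch when it has weight zero.\<close>

lemma C_E_normalize:
  fixes r :: "nat \<Rightarrow> real"
  assumes "\<And>i. i < 4 \<Longrightarrow> 0 \<le> r i"
  defines "a \<equiv> \<Sum>i<4. r i"
  shows "a * C_E (\<lambda>i. r i / a) = 2 * a + (\<Sum>i<4. xlog2 (r i)) - xlog2 a"
proof (cases "a = 0")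
  case True
  then have "r i = 0" if "i < 4" for i
    using sum_nonneg_eq_0_iff[of "{..<4}" r] assms(1) that by (simp add: a_def)
  then show ?thesis
    using True by (simp add: xlog2_def)
next
  case False
  have "0 \<le> a"
    unfolding a_def by (rule sum_nonneg) (simp add: assms(1))
  with False have "0 < a" by simp
  have "a * C_E (\<lambda>i. r i / a) = 2 * a + (\<Sum>i<4. a * xlog2 (r i / a))"
    unfolding C_E_def by (simp add: algebra_simps sum_distrib_left)
  also have "\<dots> = 2 * a + (\<Sum>i<4. xlog2 (r i) - r i * log 2 a)"
    using \<open>0 < a\<close> assms by (simp add: xlog2_divide)
  also have "\<dots> = 2 * a + (\<Sum>i<4. xlog2 (r i)) - xlog2 a"
    using False by (simp add: sum_subtractf sum_distrib_right[symmetric] a_def xlog2_def)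
  finally show ?thesis .
qed

lemma weight_plus_nonneg:
  assumes "\<And>i. i < 4 \<Longrightarrow> 0 \<le> d i" "\<And>j. j < 4 \<Longrightarrow> 0 \<le> e j"
  shows "0 \<le> weight_plus d e k"
  unfolding weight_plus_def using assms by (intro sum_nonneg) simp

lemma weight_minus_nonneg:
  assumes "\<And>i. i < 4 \<Longrightarrow> 0 \<le> d i" "\<And>j. j < 4 \<Longrightarrow> 0 \<le> e j"
  shows "0 \<le> weight_minus d e k"
  unfolding weight_minus_def using assms by (intro sum_nonneg) simp

theorem C_EQ_eq_H2:
  assumes "\<And>i. i < 4 \<Longrightarrow> 0 \<le> d i" "\<And>j. j < 4 \<Longrightarrow> 0 \<le> e j"
    and "(\<Sum>i<4. d i) = 1" "(\<Sum>j<4. e j) = 1"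
  shows "C_EQ d e = 2 + H2 (p_plus d e)
           + (\<Sum>k<4. xlog2 (weight_plus d e k)) + (\<Sum>k<4. xlog2 (weight_minus d e k))"
proof -
  have "0 \<le> weight_plus d e k" for k
    using assms(1,2) by (rule weight_plus_nonneg)
  moreover have "0 \<le> weight_minus d e k" for k
    using assms(1,2) by (rule weight_minus_nonneg)
  ultimately have plus: "p_plus d e * C_E (S_plus d e) =
      2 * p_plus d e + (\<Sum>k<4. xlog2 (weight_plus d e k)) - xlog2 (p_plus d e)"
    and minus: "p_minus d e * C_E (S_minus d e) =
      2 * p_minus d e + (\<Sum>k<4. xlog2 (weight_minus d e k)) - xlog2 (p_minus d e)"
    using C_E_normalize[of "weight_plus d e"] C_E_normalize[of "weight_minus d e"]
    unfolding S_plus_eq_weight_plus S_minus_eq_weight_minus sum_weight_plus sum_weight_minus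
    by simp_all
  have "p_minus d e = 1 - p_plus d e"
    using p_plus_add_p_minus[of d e] assms(3,4) by simp
  then show ?thesis
    unfolding C_EQ_def plus minus H2_def by simp
qed

lemma depolarizing_nonneg: "0 \<le> p \<Longrightarrow> p \<le> 1 \<Longrightarrow> 0 \<le> depolarizing p i"
  by (simp add: depolarizing_def)

lemma sum_depolarizing: "(\<Sum>i<4. depolarizing p i) = 1"
  by (simp add: sum_lessThan_4 depolarizing_def)

lemma p_plus_depolarizing: "p_plus (depolarizing p) (depolarizing q) = 1 - 2 * p * q / 3"
  unfolding p_plus_def sum_lessThan_4
  by (simp add: kraus_commute_iff depolarizing_def field_simps)

lemma weight_plus_depolarizing:
  assumes "k < 4"
  shows "weight_plus (depolarizing p) (depolarizing q) k =
           (if k = 0 then 1 - p - q + 4 * p * q / 3 else (p + q - 2 * p * q) / 3)"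
  using less_4_cases[OF assms] unfolding weight_plus_def sum_lessThan_4
  by (elim disjE) (simp_all add: kraus_commute_iff prod_prop_iff depolarizing_def field_simps)

lemma weight_minus_depolarizing:
  assumes "k < 4"
  shows "weight_minus (depolarizing p) (depolarizing q) k = (if k = 0 then 0 else 2 * p * q / 9)"
  using less_4_cases[OF assms] unfolding weight_minus_def sum_lessThan_4
  by (elim disjE) (simp_all add: kraus_commute_iff prod_prop_iff depolarizing_def)

theorem corollary6:
  fixes p q :: real
  assumes "0 \<le> p" "p \<le> 1" "0 \<le> q" "q \<le> 1"
  shows "C_EQ (depolarizing p) (depolarizing q) =
           2 + H2 (1 - 2 * p * q / 3)
           + xlog2 (1 - p - q + 4 * p * q / 3)
           + (p + q - 2 * p * q) * log 2 ((p + q - 2 * p * q) / 3)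
           + (2 * p * q / 3) * log 2 (2 * p * q / 9)"
proof -
  have "(\<Sum>k<4. xlog2 (weight_plus (depolarizing p) (depolarizing q) k)) =
        xlog2 (1 - p - q + 4 * p * q / 3) + 3 * xlog2 ((p + q - 2 * p * q) / 3)"
    by (simp add: sum_lessThan_4 weight_plus_depolarizing)
  moreover have "(\<Sum>k<4. xlog2 (weight_minus (depolarizing p) (depolarizing q) k)) =
        3 * xlog2 ((2 * p * q / 3) / 3)"
    by (simp add: sum_lessThan_4 weight_minus_depolarizing xlog2_def)
  ultimately show ?thesis
    using C_EQ_eq_H2[OF depolarizing_nonneg depolarizing_nonneg sum_depolarizing sum_depolarizing] assms
    by (simp add: p_plus_depolarizing mult_xlog2_divide)
qed

end
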